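(* If $(\Sigma, *, \mathsf{emp})$ is a separation algebra, then $(\Sigma^+, *, \Sigma^*.\mathsf{emp})$ is a separation algebra, where for $\sigma.s, \tau.t\in\Sigma^+$ the product $\sigma.s * \tau.t$ is defined iff $\sigma=\tau$ and $s * t$ is defined, in which case $\sigma.s*\tau.t=\sigma.(s*t)$.
   Context: A separation algebra $(\Sigma,*,\mathsf{emp})$ is a partial commutative monoid with a set of units $\mathsf{emp}\subseteq\Sigma$ such that (i) every $s\in\Sigma$ has a unit $1\in\mathsf{emp}$ with $s*1=s$, and (ii) $1*1'$ is undefined for any two distinct units $1,1'\in\mathsf{emp}$. $\Sigma^+$ denotes nonempty finite sequences over $\Sigma$, $\Sigma^*$ all finite sequences, and $\sigma.s$ denotes the sequence $\sigma$ followed by $s$. *)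

theory Defs
  imports Main
begin

text \<open>A partial binary operation on a carrier S is modelled as a total function
  into option (None = undefined).  A separation algebra (S, f, E) is a partial
  commutative monoid with a set of units E.\<close>

definition sep_algebra :: "'a set \<Rightarrow> ('a \<Rightarrow> 'a \<Rightarrow> 'a option) \<Rightarrow> 'a set \<Rightarrow> bool" where
  "sep_algebra S f E \<longleftrightarrow>
     E \<subseteq> S \<and>
     (\<forall>x\<in>S. \<forall>y\<in>S. \<forall>z. f x y = Some z \<longrightarrow> z \<in> S) \<and>
     (\<forall>x\<in>S. \<forall>y\<in>S. f x y = f y x) \<and>
     (\<forall>x\<in>S. \<forall>y\<in>S. \<forall>z\<in>S.
        Option.bind (f x y) (\<lambda>a. f a z) = Option.bind (f y z) (\<lambda>b. f x b)) \<and>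
     (\<forall>e\<in>E. \<forall>x\<in>S. \<forall>z. f x e = Some z \<longrightarrow> z = x) \<and>
     (\<forall>x\<in>S. \<exists>e\<in>E. f x e = Some x) \<and>
     (\<forall>e\<in>E. \<forall>e'\<in>E. e \<noteq> e' \<longrightarrow> f e e' = None)"

text \<open>Lifting to nonempty sequences: a sequence sigma.s is the list sigma @ [s].
  sigma.s * tau.t is defined iff sigma = tau and s * t is defined, and then
  equals sigma.(s*t).\<close>

definition seq_op :: "('a \<Rightarrow> 'a \<Rightarrow> 'a option) \<Rightarrow> 'a list \<Rightarrow> 'a list \<Rightarrow> 'a list option" where
  "seq_op f xs ys =
     (if xs \<noteq> [] \<and> ys \<noteq> [] \<and> butlast xs = butlast ys
      then map_option (\<lambda>z. butlast xs @ [z]) (f (last xs) (last ys))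
      else None)"

end

theory Submission
  imports Defs
begin

text \<open>The product of two sequences only involves their last entries and requires the
  prefixes to agree, so each axiom for the lifted operation reduces to the same axiom for
  the last entries, with the common prefix carried along unchanged.  Two distinct lifted
  units either differ in their prefixes, which makes their product undefined, or end in
  distinct units of the base algebra.\<close>

abbreviation nonempty_lists :: "'a set \<Rightarrow> 'a list set" where
  "nonempty_lists S \<equiv> {xs. xs \<noteq> [] \<and> set xs \<subseteq> S}"

abbreviation unit_lists :: "'a set \<Rightarrow> 'a set \<Rightarrow> 'a list set" where
  "unit_lists S E \<equiv> {\<sigma> @ [e] | \<sigma> e. set \<sigma> \<subseteq> S \<and> e \<in> E}"

lemma ball_nonempty_lists_iff:
  "(\<forall>xs\<in>nonempty_lists S. P xs) \<longleftrightarrow> (\<forall>a x. set a \<subseteq> S \<longrightarrow> x \<in> S \<longrightarrow> P (a @ [x]))"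
proof (intro iffI allI impI ballI)
  fix a x
  assume "\<forall>xs\<in>nonempty_lists S. P xs" "set a \<subseteq> S" "x \<in> S"
  then show "P (a @ [x])" by simp
next
  fix xs
  assume "\<forall>a x. set a \<subseteq> S \<longrightarrow> x \<in> S \<longrightarrow> P (a @ [x])" "xs \<in> nonempty_lists S"
  then show "P xs" by (cases xs rule: rev_cases) simp_all
qed

lemma ball_unit_lists_iff:
  "(\<forall>es\<in>unit_lists S E. P es) \<longleftrightarrow> (\<forall>a e. set a \<subseteq> S \<longrightarrow> e \<in> E \<longrightarrow> P (a @ [e]))"
  by blast

lemma unit_lists_subset:
  "E \<subseteq> S \<Longrightarrow> unit_lists S E \<subseteq> nonempty_lists S"
  by auto

lemma seq_op_snoc:
  "seq_op f (a @ [x]) (b @ [y]) = (if a = b then map_option (\<lambda>z. a @ [z]) (f x y) else None)"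
  by (simp add: seq_op_def)

lemma seq_op_snoc_eq_Some_iff:
  "seq_op f (a @ [x]) (b @ [y]) = Some zs \<longleftrightarrow> a = b \<and> (\<exists>z. f x y = Some z \<and> zs = a @ [z])"
  by (auto simp: seq_op_snoc)

lemma seq_op_closed:
  assumes closed: "\<forall>x\<in>S. \<forall>y\<in>S. \<forall>z. f x y = Some z \<longrightarrow> z \<in> S"
  shows "\<forall>xs\<in>nonempty_lists S. \<forall>ys\<in>nonempty_lists S. \<forall>zs.
           seq_op f xs ys = Some zs \<longrightarrow> zs \<in> nonempty_lists S"
  unfolding ball_nonempty_lists_iff
proof (intro allI impI)
  fix a x b y zs
  assume "set a \<subseteq> S" "x \<in> S" "y \<in> S" "seq_op f (a @ [x]) (b @ [y]) = Some zs"
  moreover from this obtain z where "f x y = Some z" "zs = a @ [z]"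
    by (auto simp: seq_op_snoc_eq_Some_iff)
  moreover from calculation have "z \<in> S"
    using closed by blast
  ultimately show "zs \<in> nonempty_lists S"
    by simp
qed

lemma seq_op_commute:
  assumes "\<forall>x\<in>S. \<forall>y\<in>S. f x y = f y x"
  shows "\<forall>xs\<in>nonempty_lists S. \<forall>ys\<in>nonempty_lists S. seq_op f xs ys = seq_op f ys xs"
  using assms unfolding ball_nonempty_lists_iff by (simp add: seq_op_snoc)

lemma bind_seq_op_snoc:
  "Option.bind (seq_op f (a @ [x]) (b @ [y])) g =
     (if a = b then Option.bind (f x y) (\<lambda>z. g (a @ [z])) else None)"
  by (cases "f x y") (simp_all add: seq_op_snoc)

lemma seq_op_assoc:
  assumes "\<forall>x\<in>S. \<forall>y\<in>S. \<forall>z\<in>S.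
             Option.bind (f x y) (\<lambda>u. f u z) = Option.bind (f y z) (\<lambda>v. f x v)"
  shows "\<forall>xs\<in>nonempty_lists S. \<forall>ys\<in>nonempty_lists S. \<forall>zs\<in>nonempty_lists S.
           Option.bind (seq_op f xs ys) (\<lambda>us. seq_op f us zs) =
           Option.bind (seq_op f ys zs) (\<lambda>vs. seq_op f xs vs)"
  unfolding ball_nonempty_lists_iff
proof (intro allI impI)
  fix a x b y c z
  assume "x \<in> S" "y \<in> S" "z \<in> S"
  then have base: "Option.bind (f x y) (\<lambda>u. f u z) = Option.bind (f y z) (\<lambda>v. f x v)"
    using assms by blast
  have "Option.bind (seq_op f (a @ [x]) (b @ [y])) (\<lambda>us. seq_op f us (c @ [z])) =
          (if a = b \<and> b = c then map_option (\<lambda>w. a @ [w]) (Option.bind (f x y) (\<lambda>u. f u z))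
           else None)"
    unfolding bind_seq_op_snoc by (cases "f x y") (simp_all add: seq_op_snoc)
  also have "\<dots> = Option.bind (seq_op f (b @ [y]) (c @ [z])) (\<lambda>vs. seq_op f (a @ [x]) vs)"
    unfolding bind_seq_op_snoc base by (cases "f y z") (auto simp: seq_op_snoc)
  finally show "Option.bind (seq_op f (a @ [x]) (b @ [y])) (\<lambda>us. seq_op f us (c @ [z])) =
                  Option.bind (seq_op f (b @ [y]) (c @ [z])) (\<lambda>vs. seq_op f (a @ [x]) vs)" .
qed

lemma seq_op_unit_neutral:
  assumes "\<forall>e\<in>E. \<forall>x\<in>S. \<forall>z. f x e = Some z \<longrightarrow> z = x"
  shows "\<forall>es\<in>unit_lists S E. \<forall>xs\<in>nonempty_lists S. \<forall>zs. seq_op f xs es = Some zs \<longrightarrow> zs = xs"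
  unfolding ball_nonempty_lists_iff ball_unit_lists_iff
proof (intro allI impI)
  fix b e a x zs
  assume "e \<in> E" "x \<in> S" "seq_op f (a @ [x]) (b @ [e]) = Some zs"
  then show "zs = a @ [x]"
    using assms by (auto simp: seq_op_snoc_eq_Some_iff)
qed

lemma seq_op_exists_unit:
  assumes "\<forall>x\<in>S. \<exists>e\<in>E. f x e = Some x"
  shows "\<forall>xs\<in>nonempty_lists S. \<exists>es\<in>unit_lists S E. seq_op f xs es = Some xs"
  unfolding ball_nonempty_lists_iff
proof (intro allI impI)
  fix a x
  assume "set a \<subseteq> S" "x \<in> S"
  moreover from this obtain e where "e \<in> E" "f x e = Some x"
    using assms by blast
  ultimately have "a @ [e] \<in> unit_lists S E" "seq_op f (a @ [x]) (a @ [e]) = Some (a @ [x])"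
    by (auto simp: seq_op_snoc)
  then show "\<exists>es\<in>unit_lists S E. seq_op f (a @ [x]) es = Some (a @ [x])" ..
qed

lemma seq_op_units_disjoint:
  assumes "\<forall>e\<in>E. \<forall>e'\<in>E. e \<noteq> e' \<longrightarrow> f e e' = None"
  shows "\<forall>es\<in>unit_lists S E. \<forall>es'\<in>unit_lists S E. es \<noteq> es' \<longrightarrow> seq_op f es es' = None"
  using assms unfolding ball_unit_lists_iff by (simp add: seq_op_snoc)

theorem lemma3p1:
  assumes "sep_algebra S f E"
  shows "sep_algebra {xs. xs \<noteq> [] \<and> set xs \<subseteq> S} (seq_op f)
           {\<sigma> @ [e] | \<sigma> e. set \<sigma> \<subseteq> S \<and> e \<in> E}"
  using assms unfolding sep_algebra_def
  by (elim conjE) (intro conjI unit_lists_subset seq_op_closed seq_op_commute seq_op_assoc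
      seq_op_unit_neutral seq_op_exists_unit seq_op_units_disjoint; assumption)

end
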